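(* For every $n\ge1$ there is an injective map from $\bar{Q}_5(0,n)$ to $P_8(0,n)$.
   Context: Partitions: $\lambda_1\ge\cdots\ge\lambda_\ell>0$, $\ell(\lambda)=\ell$, $\lambda_i=0$ for $i>\ell$, $s(\lambda)$ the smallest part with $s(\emptyset)=+\infty$. Rank $=\lambda_1-\ell$. Durfee symbol $(\alpha,\beta)_j$ of $\lambda$: $j$ is the largest integer with $\lambda_j\ge j$, $\alpha$ is the conjugate of $(\lambda_1-j,\dots,\lambda_j-j)$, $\beta=(\lambda_{j+1},\lambda_{j+2},\dots)$; $|\lambda|=|\alpha|+|\beta|+j^2$. $\bar{Q}_5(0,n)$ is the set of partitions of $n$ whose Durfee symbol $(\alpha,\beta)_j$ satisfies $j\ge1$, $\ell(\beta)-\ell(\alpha)\ge1$, $\alpha_1=\alpha_2=j$, $s(\alpha)\ge2$, $\beta_1=j>\beta_2$ and $s(\beta)=2$. $P_8(0,n)$ is the set of partitions of $n$ with rank $\ge0$ whose Durfee symbol $(\gamma,\delta)_{j'}$ satisfies $j'\ge1$, $\ell(\gamma)=\ell(\delta)$, $\gamma_1=\gamma_2=j'-1$, $\delta_1=j'$, and $\delta$ has no part equal to $2$. *)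

theory Defs
  imports Main "HOL-Library.Extended_Nat"
begin

definition is_partition :: "nat list \<Rightarrow> bool" where
  "is_partition xs \<longleftrightarrow> sorted_wrt (\<ge>) xs \<and> 0 \<notin> set xs"

definition partitions_of :: "nat \<Rightarrow> nat list set" where
  "partitions_of n = {xs. is_partition xs \<and> sum_list xs = n}"

text \<open>1-indexed part, with value 0 beyond the length.\<close>
definition part :: "nat list \<Rightarrow> nat \<Rightarrow> nat" where
  "part xs i = (if 1 \<le> i \<and> i \<le> length xs then xs ! (i - 1) else 0)"

definition smallest :: "nat list \<Rightarrow> enat" where
  "smallest xs = (if xs = [] then \<infinity> else enat (Min (set xs)))"

definition rank :: "nat list \<Rightarrow> int" where
  "rank xs = int (part xs 1) - int (length xs)"

definition durfee :: "nat list \<Rightarrow> nat" where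
  "durfee xs = (if \<exists>j. 1 \<le> j \<and> j \<le> part xs j
                then GREATEST j. 1 \<le> j \<and> j \<le> part xs j else 0)"

text \<open>Conjugate of a weakly decreasing list of naturals (zeros allowed; they are ignored).\<close>
definition conj :: "nat list \<Rightarrow> nat list" where
  "conj mu = map (\<lambda>k. length (filter (\<lambda>x. k \<le> x) mu)) [1..<Suc (Max (insert 0 (set mu)))]"

definition dalpha :: "nat list \<Rightarrow> nat list" where
  "dalpha xs = conj (map (\<lambda>i. part xs i - durfee xs) [1..<Suc (durfee xs)])"

definition dbeta :: "nat list \<Rightarrow> nat list" where
  "dbeta xs = drop (durfee xs) xs"

definition Q5bar :: "nat \<Rightarrow> nat list set" where
  "Q5bar n = {xs \<in> partitions_of n.
     let j = durfee xs; a = dalpha xs; b = dbeta xs in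
     j \<ge> 1 \<and> int (length b) - int (length a) \<ge> 1 \<and>
     part a 1 = j \<and> part a 2 = j \<and> smallest a \<ge> 2 \<and>
     part b 1 = j \<and> j > part b 2 \<and> smallest b = 2}"

definition P8 :: "nat \<Rightarrow> nat list set" where
  "P8 n = {xs \<in> partitions_of n.
     let j = durfee xs; g = dalpha xs; d = dbeta xs in
     rank xs \<ge> 0 \<and> j \<ge> 1 \<and> length g = length d \<and>
     part g 1 = j - 1 \<and> part g 2 = j - 1 \<and> part d 1 = j \<and> 2 \<notin> set d}"

end

theory Submission
  imports Defs "HOL-Library.Multiset"
begin

text \<open>
  A partition in Q5bar with Durfee size j has the shape (j+\<mu>_1, \<dots>, j+\<mu>_j, j, \<tau>): its
  Durfee symbol is \<alpha> = \<mu>', \<beta> = (j, \<tau>), and the conditions on \<alpha> and \<beta> say that all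
  \<mu>_i \<ge> 2, \<mu>_1 = \<mu>_2, the parts of \<tau> lie in [2, j) with 2 among them, and \<mu>_1 \<le> |\<tau>|.
  Let y = \<mu>_j be the smallest entry of \<mu> and n_s the number of parts of \<tau> that are \<ge> s.
  The image keeps the Durfee square j and extends its first j - 1 rows by
  y + |\<tau>|, y + n_3 + 1, y + n_4, \<dots>, y + n_j; below the square go a part j, the parts of
  (\<mu> - y)' each increased by one, and enough 1s to preserve the weight. Then \<gamma> has two
  largest parts j - 1, \<delta> contains no 2, and the rank is 0.
  The map is injective: j is the Durfee size of the image, y is read off row j - 1 because
  n_j = 0, \<tau> is recovered from the counts n_s, and \<mu> - y from the multiset of rows below
  the square.
\<close>

definition count_ge :: "nat \<Rightarrow> nat list \<Rightarrow> nat" where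
  "count_ge s xs = length (filter (\<lambda>x. s \<le> x) xs)"

lemma count_ge_Nil [simp]: "count_ge s [] = 0"
  by (simp add: count_ge_def)

lemma count_ge_Cons [simp]: "count_ge s (x # xs) = (if s \<le> x then 1 else 0) + count_ge s xs"
  by (simp add: count_ge_def)

lemma count_ge_append [simp]: "count_ge s (xs @ ys) = count_ge s xs + count_ge s ys"
  by (simp add: count_ge_def)

lemma count_ge_eq_length: "\<forall>x\<in>set xs. s \<le> x \<Longrightarrow> count_ge s xs = length xs"
  by (simp add: count_ge_def)

lemma count_ge_eq_lengthD: "count_ge s xs = length xs \<Longrightarrow> x \<in> set xs \<Longrightarrow> s \<le> x"
  unfolding count_ge_def by (metis length_filter_less less_irrefl)

lemma count_ge_eq_0: "\<forall>x\<in>set xs. x < s \<Longrightarrow> count_ge s xs = 0"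
  by (induction xs) auto

lemma count_ge_le_length: "count_ge s xs \<le> length xs"
  by (simp add: count_ge_def)

lemma count_ge_antimono: "s \<le> s' \<Longrightarrow> count_ge s' xs \<le> count_ge s xs"
  by (induction xs) auto

lemma count_ge_map_Suc: "count_ge (Suc s) (map Suc xs) = count_ge s xs"
  by (induction xs) auto

lemma count_ge_mset_cong: "mset xs = mset ys \<Longrightarrow> count_ge s xs = count_ge s ys"
  unfolding count_ge_def by (metis mset_filter size_mset)

lemma count_ge_eq_count_plus: "count_ge s xs = count (mset xs) s + count_ge (Suc s) xs"
  by (induction xs) auto

lemma sum_list_count_ge:
  assumes "\<forall>x\<in>set xs. x \<le> M"
  shows "(\<Sum>s\<leftarrow>[1..<Suc M]. count_ge s xs) = sum_list xs"
  using assms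
proof (induction xs)
  case Nil
  then show ?case by (simp add: sum_list_triv)
next
  case (Cons x xs)
  have "(\<Sum>s\<leftarrow>[1..<Suc N]. if s \<le> x then 1 else 0 :: nat) = min x N" for N
    by (induction N) auto
  then show ?case using Cons by (simp add: sum_list_addf)
qed

lemma sorted_wrt_ge_nth_antimono:
  assumes "sorted_wrt (\<ge>) (xs :: 'a :: order list)" "i \<le> j" "j < length xs"
  shows "xs ! j \<le> xs ! i"
  using assms sorted_wrt_nth_less[OF assms(1), of i j] by (cases "i = j") auto

lemma sorted_desc_eq_if_count_ge_eq:
  assumes "sorted_wrt (\<ge>) xs" "sorted_wrt (\<ge>) ys" "\<And>s. count_ge s xs = count_ge s ys"
  shows "xs = ys"
proof -
  have "count (mset xs) s = count (mset ys) s" for s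
    using count_ge_eq_count_plus[of s] assms(3)[of s] assms(3)[of "Suc s"] by simp
  then have "mset (rev xs) = mset (rev ys)" by (simp add: multiset_eqI)
  moreover have "sorted (rev xs)" "sorted (rev ys)" using assms(1,2) by (simp_all add: sorted_wrt_rev)
  ultimately have "rev xs = rev ys" using properties_for_sort sorted_sort_id by metis
  then show ?thesis by simp
qed

lemma le_count_ge_iff:
  assumes sorted: "sorted_wrt (\<ge>) xs" and r: "1 \<le> r" "r \<le> length xs"
  shows "r \<le> count_ge k xs \<longleftrightarrow> k \<le> xs ! (r - 1)"
proof
  assume k: "k \<le> xs ! (r - 1)"
  have "i < length xs \<and> k \<le> xs ! i" if "i < r" for i
    using sorted_wrt_ge_nth_antimono[OF sorted, of i "r - 1"] r k that by fastforce
  then have "card {0..<r} \<le> card {i. i < length xs \<and> k \<le> xs ! i}"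
    by (intro card_mono) auto
  then show "r \<le> count_ge k xs" by (simp add: count_ge_def length_filter_conv_card)
next
  assume r_le: "r \<le> count_ge k xs"
  show "k \<le> xs ! (r - 1)"
  proof (rule ccontr)
    assume "\<not> k \<le> xs ! (r - 1)"
    then have "{i. i < length xs \<and> k \<le> xs ! i} \<subseteq> {0..<r - 1}"
      using sorted_wrt_ge_nth_antimono[OF sorted] r
      by (auto, meson le_trans not_le le_less_trans not_less)
    then have "card {i. i < length xs \<and> k \<le> xs ! i} \<le> r - 1"
      by (metis card_atLeastLessThan card_mono diff_zero finite_atLeastLessThan)
    then show False using r_le r by (simp add: count_ge_def length_filter_conv_card)
  qed
qed

lemma Max_insert_0_sorted_desc:
  assumes "sorted_wrt (\<ge>) (xs :: nat list)" "xs \<noteq> []"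
  shows "Max (insert 0 (set xs)) = xs ! 0"
proof (rule Max_eqI)
  fix x assume "x \<in> insert 0 (set xs)"
  then show "x \<le> xs ! 0"
    using sorted_wrt_ge_nth_antimono[OF assms(1), of 0] by (auto simp: in_set_conv_nth)
qed (use assms in auto)

lemma filter_le_upt: "b \<le> M \<Longrightarrow> filter (\<lambda>k. k \<le> b) [1..<Suc M] = [1..<Suc b]"
proof (induction M)
  case (Suc M)
  show ?case
  proof (cases "b \<le> M")
    case False
    then have "b = Suc M" using Suc.prems by simp
    then show ?thesis by (simp del: upt_Suc)
  qed (use Suc in simp)
qed simp

lemma part_nth: "1 \<le> i \<Longrightarrow> i \<le> length xs \<Longrightarrow> part xs i = xs ! (i - 1)"
  by (simp add: Defs.part_def)

lemma length_conj: "length (conj xs) = Max (insert 0 (set xs))"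
  by (simp add: conj_def)

lemma nth_conj: "i < Max (insert 0 (set xs)) \<Longrightarrow> conj xs ! i = count_ge (Suc i) xs"
  unfolding conj_def by (simp del: upt_Suc add: count_ge_def)

lemma part_conj: "1 \<le> i \<Longrightarrow> i \<le> Max (insert 0 (set xs)) \<Longrightarrow> part (conj xs) i = count_ge i xs"
  by (simp add: part_nth length_conj nth_conj)

lemma set_conj: "set (conj xs) = (\<lambda>k. count_ge k xs) ` {1..Max (insert 0 (set xs))}"
  by (auto simp: conj_def count_ge_def)

lemma sum_list_conj: "sum_list (conj xs) = sum_list xs"
  using sum_list_count_ge[of xs "Max (insert 0 (set xs))"] by (simp add: conj_def count_ge_def)

lemma count_ge_conj:
  assumes sorted: "sorted_wrt (\<ge>) xs" and r: "1 \<le> r" "r \<le> length xs"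
  shows "count_ge r (conj xs) = xs ! (r - 1)"
proof -
  let ?M = "Max (insert 0 (set xs))"
  have "xs ! (r - 1) \<le> xs ! 0" using sorted_wrt_ge_nth_antimono[OF sorted, of 0 "r - 1"] r by simp
  then have le_M: "xs ! (r - 1) \<le> ?M" using Max_insert_0_sorted_desc[OF sorted] r by auto
  have "count_ge r (conj xs) = length (filter (\<lambda>k. r \<le> count_ge k xs) [1..<Suc ?M])"
    by (simp add: conj_def count_ge_def filter_map o_def)
  also have "filter (\<lambda>k. r \<le> count_ge k xs) [1..<Suc ?M] = filter (\<lambda>k. k \<le> xs ! (r - 1)) [1..<Suc ?M]"
    using le_count_ge_iff[OF sorted r] by simp
  also have "\<dots> = [1..<Suc (xs ! (r - 1))]"
    using le_M filter_le_upt by simp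
  finally show ?thesis by simp
qed

lemma durfee_eqI:
  assumes sorted: "sorted_wrt (\<ge>) xs" and j: "1 \<le> j" "j \<le> length xs" "j \<le> xs ! (j - 1)"
    and below: "j < length xs \<Longrightarrow> xs ! j \<le> j"
  shows "durfee xs = j"
proof -
  have at_j: "1 \<le> j \<and> j \<le> part xs j" using j by (simp add: part_nth)
  have "i \<le> j" if i: "1 \<le> i \<and> i \<le> part xs i" for i
  proof (rule ccontr)
    assume "\<not> i \<le> j"
    moreover have "i \<le> length xs" using i by (auto simp: Defs.part_def split: if_splits)
    ultimately have "xs ! (i - 1) \<le> j"
      using sorted_wrt_ge_nth_antimono[OF sorted, of j "i - 1"] below by fastforce
    then show False using i \<open>\<not> i \<le> j\<close> \<open>i \<le> length xs\<close> by (simp add: part_nth)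
  qed
  then have "(GREATEST i. 1 \<le> i \<and> i \<le> part xs i) = j"
    using at_j by (intro Greatest_equality) auto
  then show ?thesis unfolding durfee_def using at_j by auto
qed

lemma dalpha_conv_take:
  "durfee xs \<le> length xs \<Longrightarrow> dalpha xs = conj (map (\<lambda>x. x - durfee xs) (take (durfee xs) xs))"
  unfolding dalpha_def
  by (rule arg_cong[where f = conj], rule nth_equalityI) (auto simp del: upt_Suc simp: part_nth)

definition q5_data :: "nat \<Rightarrow> nat list \<Rightarrow> nat list \<Rightarrow> bool" where
  "q5_data j mu tau \<longleftrightarrow> 3 \<le> j \<and> length mu = j \<and> sorted_wrt (\<ge>) mu \<and> mu ! 1 = mu ! 0 \<and>
     (\<forall>x\<in>set mu. 2 \<le> x) \<and> sorted_wrt (\<ge>) tau \<and> (\<forall>t\<in>set tau. 2 \<le> t \<and> t < j) \<and>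
     2 \<in> set tau \<and> mu ! 0 \<le> length tau"

definition q5_partition :: "nat \<Rightarrow> nat list \<Rightarrow> nat list \<Rightarrow> nat list" where
  "q5_partition j mu tau = map (\<lambda>x. j + x) mu @ j # tau"

lemma alpha_conditions_imp:
  assumes sorted: "sorted_wrt (\<ge>) mu" and "mu \<noteq> []"
    and part2: "part (conj mu) 2 = length mu" and smallest: "smallest (conj mu) \<ge> 2"
  shows "\<forall>x\<in>set mu. 2 \<le> x" and "mu ! 1 = mu ! 0"
proof -
  define M where "M = Max (insert 0 (set mu))"
  have M: "M = mu ! 0" using Max_insert_0_sorted_desc[OF sorted \<open>mu \<noteq> []\<close>] by (simp add: M_def)
  have "part (conj mu) 2 \<noteq> 0" using part2 \<open>mu \<noteq> []\<close> by simp
  then have M2: "2 \<le> M" by (auto simp: Defs.part_def length_conj M_def split: if_splits)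
  have "count_ge 2 mu = length mu" using part2 part_conj[of 2 mu] M2 by (simp add: M_def)
  then show "\<forall>x\<in>set mu. 2 \<le> x" using count_ge_eq_lengthD by blast
  have "conj mu \<noteq> []" using M2 length_conj[of mu] by (auto simp: M_def)
  then have "2 \<le> Min (set (conj mu))" using smallest by (simp add: smallest_def numeral_eq_enat)
  moreover have "count_ge M mu \<in> set (conj mu)" using M2 by (simp add: set_conj M_def)
  ultimately have two_le: "2 \<le> count_ge M mu" by (meson List.finite_set Min_le order.trans)
  then have "2 \<le> length mu" using count_ge_le_length[of M mu] by simp
  then have "M \<le> mu ! 1" "mu ! 1 \<le> mu ! 0"
    using le_count_ge_iff[OF sorted, of 2 M] two_le sorted_wrt_ge_nth_antimono[OF sorted, of 0 1]
    by simp_all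
  then show "mu ! 1 = mu ! 0" using M by simp
qed

lemma beta_conditions_imp:
  assumes sorted: "sorted_wrt (\<ge>) b" and "1 \<le> j"
    and "part b 1 = j" "part b 2 < j" "smallest b = 2"
  shows "b = j # tl b" and "\<forall>t\<in>set (tl b). 2 \<le> t \<and> t < j" and "2 \<in> set b"
proof -
  have "b \<noteq> []" using assms(2,3) by (auto simp: Defs.part_def)
  then have min_b: "Min (set b) = 2" using assms(5) by (simp add: smallest_def numeral_eq_enat)
  obtain tau where b: "b = j # tau" using \<open>b \<noteq> []\<close> assms(3) by (cases b) (auto simp: part_nth)
  then show "b = j # tl b" by simp
  have "\<forall>t\<in>set tau. t \<le> part b 2" using sorted b by (cases tau) (auto simp: Defs.part_def)
  moreover have "\<forall>t\<in>set b. 2 \<le> t" using min_b by (metis List.finite_set Min_le)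
  ultimately show "\<forall>t\<in>set (tl b). 2 \<le> t \<and> t < j" using assms(4) b by fastforce
  show "2 \<in> set b" using min_b \<open>b \<noteq> []\<close> by (metis List.finite_set Min_in set_empty)
qed

lemma Q5bar_decomp:
  assumes "xs \<in> Q5bar n"
  defines "j \<equiv> durfee xs"
  defines "mu \<equiv> map (\<lambda>x. x - j) (take j xs)" and "tau \<equiv> drop (Suc j) xs"
  shows "q5_data j mu tau" and "xs = q5_partition j mu tau"
proof -
  have sorted: "sorted_wrt (\<ge>) xs"
    using assms(1) by (simp add: Q5bar_def partitions_of_def is_partition_def)
  define a where "a = dalpha xs"
  define b where "b = dbeta xs"
  have c: "j \<ge> 1" "int (length b) - int (length a) \<ge> 1"
    "part a 1 = j" "part a 2 = j" "smallest a \<ge> 2"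
    "part b 1 = j" "j > part b 2" "smallest b = 2"
    using assms(1) unfolding Q5bar_def Let_def a_def b_def j_def by auto
  have b_drop: "b = drop j xs" by (simp add: b_def dbeta_def j_def)
  have sorted_b: "sorted_wrt (\<ge>) b" using sorted by (simp add: b_drop sorted_wrt_drop)
  have b: "b = j # tau" and tau: "\<forall>t\<in>set tau. 2 \<le> t \<and> t < j" and "2 \<in> set b"
    using beta_conditions_imp[OF sorted_b c(1,6,7,8)] by (simp_all add: b_drop tau_def drop_Suc tl_drop)
  have j_less: "j < length xs" using b b_drop by (metis list.distinct(1) drop_all not_le_imp_less)
  have a: "a = conj mu" using dalpha_conv_take[of xs] j_less by (simp add: a_def mu_def j_def)
  have length_mu: "length mu = j" using j_less by (simp add: mu_def)
  have sorted_mu: "sorted_wrt (\<ge>) mu" unfolding mu_def sorted_wrt_map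
    by (rule sorted_wrt_mono_rel[of _ "(\<ge>)"]) (use sorted sorted_wrt_take in auto)
  have "mu \<noteq> []" using length_mu c(1) by auto
  have mu: "\<forall>x\<in>set mu. 2 \<le> x" "mu ! 1 = mu ! 0"
    using alpha_conditions_imp[OF sorted_mu \<open>mu \<noteq> []\<close>] c(4,5) length_mu a by simp_all
  have "mu ! 0 \<le> length tau"
    using c(2) b a Max_insert_0_sorted_desc[OF sorted_mu \<open>mu \<noteq> []\<close>] by (simp add: length_conj)
  moreover have "2 \<le> mu ! 0" using mu(1) \<open>mu \<noteq> []\<close> by simp
  ultimately obtain t where "t \<in> set tau" by (metis le_zero_eq length_0_conv list.set_sel(1) not_numeral_le_zero)
  then have "3 \<le> j" using tau by fastforce
  then have "2 \<in> set tau" using \<open>2 \<in> set b\<close> b by simp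
  show "q5_data j mu tau" unfolding q5_data_def
    using \<open>3 \<le> j\<close> length_mu sorted_mu mu sorted tau \<open>2 \<in> set tau\<close> \<open>mu ! 0 \<le> length tau\<close>
    by (simp add: tau_def sorted_wrt_drop)
  have "\<forall>x\<in>set (take j xs). j \<le> x" using mu(1) by (fastforce simp: mu_def)
  then have "take j xs = map (\<lambda>x. j + x) mu" by (simp add: mu_def map_idI)
  then show "xs = q5_partition j mu tau"
    using append_take_drop_id[of j xs] b b_drop by (simp add: q5_partition_def)
qed

lemma sum_list_map_diff_add:
  "\<forall>x\<in>set xs. y \<le> x \<Longrightarrow> (\<Sum>x\<leftarrow>xs. x - y) + length xs * y = sum_list (xs :: nat list)"
  by (induction xs) auto

lemma q5_data_min:
  assumes "q5_data j mu tau"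
  shows "\<forall>x\<in>set mu. mu ! (j - 1) \<le> x" and "2 \<le> mu ! (j - 1)" and "mu ! (j - 1) \<le> mu ! 0"
proof -
  have "3 \<le> j" "length mu = j" "sorted_wrt (\<ge>) mu" "\<forall>x\<in>set mu. 2 \<le> x"
    using assms by (auto simp: q5_data_def)
  then show "\<forall>x\<in>set mu. mu ! (j - 1) \<le> x" "mu ! (j - 1) \<le> mu ! 0"
    using sorted_wrt_ge_nth_antimono[of mu _ "j - 1"] by (auto simp: in_set_conv_nth)
  show "2 \<le> mu ! (j - 1)" using \<open>\<forall>x\<in>set mu. 2 \<le> x\<close> \<open>3 \<le> j\<close> \<open>length mu = j\<close> by simp
qed

lemma conj_excess:
  assumes q5: "q5_data j mu tau"
  defines "y \<equiv> mu ! (j - 1)"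
  defines "ex \<equiv> conj (map (\<lambda>x. x - y) mu)"
  shows "length ex = mu ! 0 - y"
    and "\<forall>v\<in>set ex. 2 \<le> v \<and> v < j"
    and "sum_list ex + j * y = sum_list mu"
    and "\<And>r. 1 \<le> r \<Longrightarrow> r \<le> j \<Longrightarrow> count_ge r ex = mu ! (r - 1) - y"
proof -
  have q: "3 \<le> j" "length mu = j" "sorted_wrt (\<ge>) mu" "mu ! 1 = mu ! 0"
    using q5 by (auto simp: q5_data_def)
  note y = q5_data_min[OF q5, folded y_def]
  define a where "a = map (\<lambda>x. x - y) mu"
  have sorted_a: "sorted_wrt (\<ge>) a" unfolding a_def sorted_wrt_map
    by (rule sorted_wrt_mono_rel[of _ "(\<ge>)"]) (use q in auto)
  have length_a: "length a = j" using q by (simp add: a_def)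
  then have "a \<noteq> []" using q by auto
  have M: "Max (insert 0 (set a)) = mu ! 0 - y"
    using Max_insert_0_sorted_desc[OF sorted_a \<open>a \<noteq> []\<close>] \<open>a \<noteq> []\<close> by (simp add: a_def)
  show "length ex = mu ! 0 - y" using M by (simp add: ex_def a_def[symmetric] length_conj)
  show "\<forall>v\<in>set ex. 2 \<le> v \<and> v < j"
  proof
    fix v assume "v \<in> set ex"
    then obtain k where k: "1 \<le> k" "k \<le> mu ! 0 - y" "v = count_ge k a"
      using set_conj[of a] M by (auto simp: ex_def a_def)
    have "a ! 1 = mu ! 0 - y" "a ! (j - 1) = 0" using q by (simp_all add: a_def y_def)
    then show "2 \<le> v \<and> v < j"
      using le_count_ge_iff[OF sorted_a, of 2 k] le_count_ge_iff[OF sorted_a, of j k] k length_a q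
      by simp
  qed
  show "sum_list ex + j * y = sum_list mu"
    using sum_list_map_diff_add[OF y(1)] q(2) by (simp add: ex_def sum_list_conj)
  fix r assume "1 \<le> r" "r \<le> j"
  then show "count_ge r ex = mu ! (r - 1) - y"
    using count_ge_conj[OF sorted_a, of r] length_a by (simp add: ex_def a_def)
qed

definition p8_head :: "nat \<Rightarrow> nat list \<Rightarrow> nat list \<Rightarrow> nat list" where
  "p8_head j mu tau = (let y = mu ! (j - 1) in
     (j + length tau + y) # (j + count_ge 3 tau + y + 1) #
     map (\<lambda>s. j + count_ge s tau + y) [4..<Suc j])"

definition p8_tail :: "nat \<Rightarrow> nat list \<Rightarrow> nat list \<Rightarrow> nat list" where
  "p8_tail j mu tau = (let y = mu ! (j - 1) in
     j # j # rev (sort (map Suc (conj (map (\<lambda>x. x - y) mu)))) @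
     replicate (length tau + 2 * y - (mu ! 0 + 1)) 1)"

definition p8_partition :: "nat \<Rightarrow> nat list \<Rightarrow> nat list \<Rightarrow> nat list" where
  "p8_partition j mu tau = p8_head j mu tau @ p8_tail j mu tau"

lemma length_p8_head: "3 \<le> j \<Longrightarrow> length (p8_head j mu tau) = j - 1"
  by (simp del: upt_Suc add: p8_head_def Let_def)

lemma nth_p8_head:
  assumes "3 \<le> j"
  shows "p8_head j mu tau ! 0 = j + length tau + mu ! (j - 1)"
    and "p8_head j mu tau ! 1 = j + count_ge 3 tau + mu ! (j - 1) + 1"
    and "\<And>s. 4 \<le> s \<Longrightarrow> s \<le> j \<Longrightarrow> p8_head j mu tau ! (s - 2) = j + count_ge s tau + mu ! (j - 1)"
proof -
  fix s assume "4 \<le> s" "s \<le> j"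
  moreover have "s - 2 = Suc (Suc (s - 4))" "[4..<Suc j] ! (s - 4) = s"
    using \<open>4 \<le> s\<close> \<open>s \<le> j\<close> by (simp_all del: upt_Suc)
  ultimately show "p8_head j mu tau ! (s - 2) = j + count_ge s tau + mu ! (j - 1)"
    by (simp del: upt_Suc add: p8_head_def Let_def)
qed (simp_all add: p8_head_def Let_def)

lemma p8_head_ge: "\<forall>x\<in>set (p8_head j mu tau). j + mu ! (j - 1) \<le> x"
  by (auto simp: p8_head_def Let_def)

lemma sorted_p8_head:
  assumes "q5_data j mu tau"
  shows "sorted_wrt (\<ge>) (p8_head j mu tau)"
proof -
  define y where "y = mu ! (j - 1)"
  define rows where "rows = map (\<lambda>s. j + count_ge s tau + y) [4..<Suc j]"
  have "count_ge 3 tau < length tau"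
    using assms unfolding q5_data_def count_ge_def by (intro length_filter_less) auto
  moreover have "\<forall>x\<in>set rows. x \<le> j + count_ge 3 tau + y"
    using count_ge_antimono[of 3 _ tau] by (auto simp: rows_def)
  moreover have "sorted_wrt (\<ge>) rows"
    unfolding rows_def sorted_wrt_map
    by (rule sorted_wrt_mono_rel[where P = "(<)"]) (auto simp del: upt_Suc intro: count_ge_antimono)
  moreover have "p8_head j mu tau = (j + length tau + y) # (j + count_ge 3 tau + y + 1) # rows"
    by (simp add: p8_head_def Let_def y_def rows_def)
  ultimately show ?thesis by fastforce
qed

lemma sum_list_p8_head:
  assumes "q5_data j mu tau"
  shows "sum_list (p8_head j mu tau) + length tau = (j - 1) * (j + mu ! (j - 1)) + sum_list tau + 1"
proof -
  define y where "y = mu ! (j - 1)"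
  define rest where "rest = (\<Sum>s\<leftarrow>[4..<Suc j]. count_ge s tau)"
  have q: "3 \<le> j" "\<forall>t\<in>set tau. 2 \<le> t \<and> t < j" using assms by (auto simp: q5_data_def)
  have "[1..<Suc j] = [1, 2, 3] @ [4..<Suc j]"
    using q(1) by (simp del: upt_Suc add: upt_conv_Cons numeral_eq_Suc)
  then have "sum_list tau = (\<Sum>s\<leftarrow>[1, 2, 3] @ [4..<Suc j]. count_ge s tau)"
    using sum_list_count_ge[of tau j] q(2) by (simp del: upt_Suc add: less_imp_le)
  also have "\<dots> = 2 * length tau + count_ge 3 tau + rest"
  proof -
    have "count_ge 1 tau = length tau" "count_ge 2 tau = length tau"
      using q(2) by (auto intro!: count_ge_eq_length)
    then show ?thesis by (simp del: upt_Suc add: rest_def)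
  qed
  finally have tau_sum: "sum_list tau = 2 * length tau + count_ge 3 tau + rest" .
  obtain i where j: "j = i + 3" using q(1) le_Suc_ex by (metis add.commute)
  have "(\<Sum>s\<leftarrow>[4..<Suc j]. j + count_ge s tau + y) = i * (j + y) + rest"
    using j by (simp del: upt_Suc add: sum_list_addf sum_list_triv rest_def algebra_simps)
  then have "sum_list (p8_head j mu tau) = (j + length tau + y) + (j + count_ge 3 tau + y + 1) + i * (j + y) + rest"
    by (simp del: upt_Suc add: p8_head_def Let_def y_def)
  moreover have "(j - 1) * (j + y) = i * (j + y) + 2 * (j + y)" using j by (simp add: algebra_simps)
  ultimately show ?thesis using tau_sum by (simp add: y_def)
qed

lemma count_ge_drop_p8_tail:
  "1 \<le> s \<Longrightarrow> count_ge (Suc s) (drop 2 (p8_tail j mu tau)) = count_ge s (conj (map (\<lambda>x. x - mu ! (j - 1)) mu))"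
  using count_ge_mset_cong[of "rev (sort (map Suc _))" "map Suc _"]
  by (simp add: p8_tail_def Let_def count_ge_eq_0 count_ge_map_Suc)

lemma p8_tail_props:
  assumes q5: "q5_data j mu tau"
  defines "T \<equiv> p8_tail j mu tau" and "y \<equiv> mu ! (j - 1)"
  shows "length T = length tau + y + 1"
    and "sorted_wrt (\<ge>) T"
    and "\<forall>x\<in>set T. 1 \<le> x \<and> x \<le> j"
    and "2 \<notin> set (tl T)"
    and "sum_list T + j * y + 1 = 2 * j + sum_list mu + length tau + y"
proof -
  define ex where "ex = conj (map (\<lambda>x. x - y) mu)"
  define R where "R = rev (sort (map Suc ex))"
  define pad where "pad = length tau + 2 * y - (mu ! 0 + 1)"
  have T: "T = j # j # R @ replicate pad 1"
    by (simp add: T_def p8_tail_def Let_def R_def ex_def pad_def y_def)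
  have q: "3 \<le> j" "mu ! 0 \<le> length tau" using q5 by (auto simp: q5_data_def)
  have y: "y \<le> mu ! 0" "2 \<le> y" using q5_data_min[OF q5] by (simp_all add: y_def)
  note ex = conj_excess[OF q5, folded y_def, folded ex_def]
  have pad: "pad + (mu ! 0 - y) + 1 = length tau + y" using q y by (simp add: pad_def)
  have R: "\<forall>x\<in>set R. 3 \<le> x \<and> x \<le> j" using ex(2) by (auto simp: R_def)
  show "length T = length tau + y + 1" using ex(1) pad by (simp add: T R_def)
  have "sorted_wrt (\<ge>) (replicate pad (1 :: nat))" by (induction pad) auto
  then show "sorted_wrt (\<ge>) T"
    using R q(1) by (auto simp: T R_def sorted_wrt_append sorted_wrt_rev)
  show "\<forall>x\<in>set T. 1 \<le> x \<and> x \<le> j" using R q(1) by (auto simp: T)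
  show "2 \<notin> set (tl T)" using R q(1) by (auto simp: T)
  have "sum_list R = sum_list (map Suc ex)"
    by (metis R_def mset_sort sum_list.rev sum_mset_sum_list)
  also have "\<dots> = sum_list ex + length ex"
    by (induction ex) auto
  finally show "sum_list T + j * y + 1 = 2 * j + sum_list mu + length tau + y"
    using ex(1,3) pad by (simp add: T sum_list_replicate)
qed

lemma durfee_symbol_append:
  assumes "durfee (H @ Z) = j" "1 \<le> j" "length H = j - 1" "Z \<noteq> []" "hd Z = j"
  shows "dalpha (H @ Z) = conj (map (\<lambda>x. x - j) H @ [0])" and "dbeta (H @ Z) = tl Z"
proof -
  have "take j (H @ Z) = H @ [j]" and "drop j (H @ Z) = tl Z"
    using assms(2-5) by (cases Z; simp)+
  moreover have "durfee (H @ Z) \<le> length (H @ Z)" using assms(1-4) by (cases Z) auto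
  ultimately show "dalpha (H @ Z) = conj (map (\<lambda>x. x - j) H @ [0])" and "dbeta (H @ Z) = tl Z"
    using dalpha_conv_take assms(1) by (simp_all add: dbeta_def)
qed

lemma is_partition_p8_partition:
  assumes q5: "q5_data j mu tau"
  shows "is_partition (p8_partition j mu tau)"
proof -
  have "\<forall>x\<in>set (p8_head j mu tau). j \<le> x" using p8_head_ge by fastforce
  moreover have "\<forall>x\<in>set (p8_tail j mu tau). 1 \<le> x \<and> x \<le> j" using p8_tail_props(3)[OF q5] .
  moreover have "sorted_wrt (\<ge>) (p8_head j mu tau)" "sorted_wrt (\<ge>) (p8_tail j mu tau)"
    using sorted_p8_head[OF q5] p8_tail_props(2)[OF q5] .
  moreover have "1 \<le> j" using q5 by (simp add: q5_data_def)
  ultimately show ?thesis unfolding is_partition_def p8_partition_def sorted_wrt_append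
    by (metis Un_iff order.trans not_one_le_zero set_append)
qed

lemma durfee_p8_partition:
  assumes q5: "q5_data j mu tau"
  shows "durfee (p8_partition j mu tau) = j"
proof -
  have "3 \<le> j" using q5 by (simp add: q5_data_def)
  then have "length (p8_head j mu tau) = j - 1" "j - 1 < j" by (simp_all add: length_p8_head)
  moreover have "p8_tail j mu tau ! 0 = j" "p8_tail j mu tau ! 1 = j"
    "2 \<le> length (p8_tail j mu tau)" by (simp_all add: p8_tail_def Let_def)
  ultimately show ?thesis
    using \<open>3 \<le> j\<close> is_partition_p8_partition[OF q5]
    by (intro durfee_eqI) (auto simp: p8_partition_def nth_append is_partition_def)
qed

lemma sum_list_p8_partition:
  assumes q5: "q5_data j mu tau"
  shows "sum_list (p8_partition j mu tau) = sum_list (q5_partition j mu tau)"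
proof -
  define y where "y = mu ! (j - 1)"
  have "length mu = j" "3 \<le> j" using q5 by (simp_all add: q5_data_def)
  then obtain i where j: "j = i + 1" by (metis add.commute le_Suc_ex le_trans one_le_numeral)
  have "sum_list (q5_partition j mu tau) = j * j + sum_list mu + j + sum_list tau"
    using \<open>length mu = j\<close> by (simp add: q5_partition_def sum_list_addf sum_list_triv)
  moreover have "(j - 1) * (j + y) = i * j + i * y" "j * y = i * y + y" "j * j = i * j + j"
    using j by (simp_all add: algebra_simps)
  ultimately show ?thesis
    using sum_list_p8_head[OF q5] p8_tail_props(5)[OF q5]
    by (simp add: p8_partition_def y_def)
qed

lemma p8_partition_in_P8:
  assumes q5: "q5_data j mu tau"
  shows "p8_partition j mu tau \<in> P8 (sum_list (q5_partition j mu tau))"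
proof -
  define T where "T = p8_partition j mu tau"
  define H where "H = p8_head j mu tau"
  define Z where "Z = p8_tail j mu tau"
  define y where "y = mu ! (j - 1)"
  define nu where "nu = map (\<lambda>x. x - j) H @ [0]"
  have j: "3 \<le> j" using q5 by (simp add: q5_data_def)
  have y: "2 \<le> y" using q5_data_min(2)[OF q5] by (simp add: y_def)
  have T: "T = H @ Z" by (simp add: T_def H_def Z_def p8_partition_def)
  have H: "length H = j - 1" "H ! 0 = j + length tau + y" "\<forall>x\<in>set H. j + y \<le> x"
    using length_p8_head[OF j] nth_p8_head(1)[OF j] p8_head_ge by (simp_all add: H_def y_def)
  have Z: "Z \<noteq> []" "hd Z = j" "tl Z ! 0 = j" "length Z = length tau + y + 1"
    using p8_tail_props(1)[OF q5] by (simp_all add: Z_def p8_tail_def Let_def y_def)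
  have durfee: "durfee T = j" using durfee_p8_partition[OF q5] by (simp add: T_def)
  have alpha: "dalpha T = conj nu" and beta: "dbeta T = tl Z"
    using durfee_symbol_append[OF durfee[unfolded T] _ H(1) Z(1,2)] j by (auto simp: nu_def T)
  have "sorted_wrt (\<ge>) nu" "nu \<noteq> []"
    using sorted_p8_head[OF q5] H j
    by (auto simp: nu_def H_def sorted_wrt_append sorted_wrt_map intro: sorted_wrt_mono_rel[rotated])
  moreover have "nu ! 0 = length tau + y" using H j by (simp add: nu_def nth_append)
  ultimately have M: "Max (insert 0 (set nu)) = length tau + y" by (metis Max_insert_0_sorted_desc)
  have "count_ge s (map (\<lambda>x. x - j) H) = j - 1" if "s \<le> 2" for s
    using H(1,3) y that by (subst count_ge_eq_length) auto
  then have "count_ge 1 nu = j - 1" "count_ge 2 nu = j - 1" by (simp_all add: nu_def)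
  then have "part (dalpha T) 1 = j - 1" "part (dalpha T) 2 = j - 1"
    using M y by (simp_all add: alpha part_conj)
  moreover have "length (dalpha T) = length (dbeta T)" using M Z(4) by (simp add: alpha beta length_conj)
  moreover have "part (dbeta T) 1 = j" "2 \<notin> set (dbeta T)"
    using Z y p8_tail_props(4)[OF q5] by (simp_all add: beta part_nth Z_def[symmetric])
  moreover have "rank T \<ge> 0" using H(1,2) Z(4) j by (simp add: T rank_def part_nth nth_append)
  ultimately show ?thesis
    using is_partition_p8_partition[OF q5] sum_list_p8_partition[OF q5] durfee j
    unfolding P8_def partitions_of_def Let_def T_def by simp
qed

lemma p8_head_inj:
  assumes q5: "q5_data j mu tau" and q5': "q5_data j mu' tau'"
    and eq: "p8_head j mu tau = p8_head j mu' tau'"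
  shows "mu ! (j - 1) = mu' ! (j - 1)" and "tau = tau'"
proof -
  have j: "3 \<le> j" and tau: "sorted_wrt (\<ge>) tau" "\<forall>t\<in>set tau. 2 \<le> t \<and> t < j"
    and tau': "sorted_wrt (\<ge>) tau'" "\<forall>t\<in>set tau'. 2 \<le> t \<and> t < j"
    using q5 q5' by (auto simp: q5_data_def)
  note row = nth_p8_head[OF j, where mu = mu and tau = tau] nth_p8_head[OF j, where mu = mu' and tau = tau']
  show y: "mu ! (j - 1) = mu' ! (j - 1)"
  proof (cases "j = 3")
    case True
    then have "count_ge 3 tau = 0" "count_ge 3 tau' = 0" using tau(2) tau'(2) by (auto intro!: count_ge_eq_0)
    then show ?thesis using row(2,5) eq by simp
  next
    case False
    have "count_ge j tau = 0" "count_ge j tau' = 0" using tau(2) tau'(2) by (auto intro!: count_ge_eq_0)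
    then show ?thesis using row(3,6)[of j] False j eq by simp
  qed
  have "count_ge s tau = count_ge s tau'" for s
  proof -
    consider "s \<le> 2" | "s = 3" | "4 \<le> s \<and> s \<le> j" | "j < s" by linarith
    then show ?thesis
    proof cases
      case 1
      then have "count_ge s tau = length tau" "count_ge s tau' = length tau'"
        using tau(2) tau'(2) by (auto intro!: count_ge_eq_length)
      then show ?thesis using row(1,4) eq y by simp
    next
      case 2
      then show ?thesis using row(2,5) eq y by simp
    next
      case 3
      then show ?thesis using row(3,6)[of s] eq y by simp
    next
      case 4
      then have "count_ge s tau = 0" "count_ge s tau' = 0"
        using tau(2) tau'(2) by (auto intro!: count_ge_eq_0)
      then show ?thesis by simp
    qed
  qed
  then show "tau = tau'" using sorted_desc_eq_if_count_ge_eq[OF tau(1) tau'(1)] by blast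
qed

lemma p8_tail_inj:
  assumes q5: "q5_data j mu tau" and q5': "q5_data j mu' tau'"
    and y: "mu ! (j - 1) = mu' ! (j - 1)" and eq: "p8_tail j mu tau = p8_tail j mu' tau'"
  shows "mu = mu'"
proof (rule nth_equalityI)
  show length: "length mu = length mu'" using q5 q5' by (simp add: q5_data_def)
  fix i assume "i < length mu"
  then have i: "1 \<le> Suc i" "Suc i \<le> j" using q5 by (simp_all add: q5_data_def)
  have "mu ! i - mu ! (j - 1) = mu' ! i - mu' ! (j - 1)"
    using count_ge_drop_p8_tail[OF i(1), of j mu tau] count_ge_drop_p8_tail[OF i(1), of j mu' tau']
      conj_excess(4)[OF q5 i] conj_excess(4)[OF q5' i] eq by simp
  moreover have "mu ! (j - 1) \<le> mu ! i" "mu' ! (j - 1) \<le> mu' ! i"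
    using q5_data_min(1)[OF q5] q5_data_min(1)[OF q5'] \<open>i < length mu\<close> length by simp_all
  ultimately show "mu ! i = mu' ! i" using y by simp
qed

lemma p8_partition_inj:
  assumes q5: "q5_data j mu tau" and q5': "q5_data j' mu' tau'"
    and eq: "p8_partition j mu tau = p8_partition j' mu' tau'"
  shows "j = j' \<and> mu = mu' \<and> tau = tau'"
proof -
  have j: "j = j'" using durfee_p8_partition[OF q5] durfee_p8_partition[OF q5'] eq by simp
  have "3 \<le> j" using q5 by (simp add: q5_data_def)
  then have "p8_head j mu tau = p8_head j mu' tau'" "p8_tail j mu tau = p8_tail j mu' tau'"
    using eq length_p8_head unfolding j p8_partition_def by simp_all
  then show ?thesis
    using p8_head_inj[OF q5 q5'[folded j]] p8_tail_inj[OF q5 q5'[folded j]] j by simp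
qed

theorem lemma5p5:
  fixes n :: nat
  assumes "n \<ge> 1"
  shows "\<exists>f. inj_on f (Q5bar n) \<and> f ` Q5bar n \<subseteq> P8 n"
proof -
  define mu where "mu xs = map (\<lambda>x. x - durfee xs) (take (durfee xs) xs)" for xs
  define tau where "tau xs = drop (Suc (durfee xs)) xs" for xs
  define f where "f xs = p8_partition (durfee xs) (mu xs) (tau xs)" for xs
  have decomp: "q5_data (durfee xs) (mu xs) (tau xs)" "xs = q5_partition (durfee xs) (mu xs) (tau xs)"
    if "xs \<in> Q5bar n" for xs
    using Q5bar_decomp[OF that] by (simp_all add: mu_def tau_def)
  have "inj_on f (Q5bar n)"
  proof (rule inj_onI)
    fix xs zs assume "xs \<in> Q5bar n" "zs \<in> Q5bar n" "f xs = f zs"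
    then show "xs = zs" using p8_partition_inj decomp unfolding f_def by metis
  qed
  moreover have "f xs \<in> P8 n" if xs: "xs \<in> Q5bar n" for xs
  proof -
    have "sum_list xs = n" using xs by (simp add: Q5bar_def partitions_of_def)
    then show ?thesis using p8_partition_in_P8[OF decomp(1)[OF xs]] decomp(2)[OF xs] by (simp add: f_def)
  qed
  ultimately show ?thesis by blast
qed

end
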